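(* Let $\alpha_i,\beta_i,\gamma_i$ ($i=1,2,3$) be real numbers such that $$\operatorname{Rank}\begin{pmatrix}\alpha_1&\beta_1&\gamma_1&0&0&0\\ \alpha_2&\beta_2&\gamma_2&0&0&0\\ 0&0&0&\alpha_3&\beta_3&\gamma_3\end{pmatrix}=3,$$ and let $B_1[u]=\alpha_1u(0)+\beta_1u'(0)+\gamma_1u''(0)$, $B_2[u]=\alpha_2u(0)+\beta_2u'(0)+\gamma_2u''(0)$, $B_3[u]=\alpha_3u(1)+\beta_3u'(1)+\gamma_3u''(1)$. Assume the problem $u'''=\varphi$ on $(0,1)$, $B_1[u]=B_2[u]=B_3[u]=0$ has a Green function $G(t,s)$, and that $G$ and $G_1=\partial G/\partial t$ each have constant sign on $[0,1]^2$. Let $G_2=\partial^2G/\partial t^2$ and $$M_0=\max_{0\le t\le1}\int_0^1|G(t,s)|ds,\quad M_1=\max_{0\le t\le1}\int_0^1|G_1(t,s)|ds,\quad M_2=\max_{0\le t\le1}\int_0^1|G_2(t,s)|ds.$$ For $M>0$ let $$\mathcal{D}_M^+=\{(t,x,y,z): 0\le t\le1,\ 0\le x\le M_0M,\ 0\le\sigma(G)\sigma(G_1)y\le M_1M,\ |z|\le M_2M\}.$$ Suppose there exist numbers $M>0$ and $L_0,L_1,L_2\ge0$ such that $f(t,x,y,z)$ is continuous on $\mathcal{D}_M^+$, $0\le\sigma(G)f(t,x,y,z)\le M$ for all $(t,x,y,z)\in\mathcal{D}_M^+$, $$|f(t,x_2,y_2,z_2)-f(t,x_1,y_1,z_1)|\le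 L_0|x_2-x_1|+L_1|y_2-y_1|+L_2|z_2-z_1|$$ for all $(t,x_i,y_i,z_i)\in\mathcal{D}_M^+$ ($i=1,2$), and $q:=L_0M_0+L_1M_1+L_2M_2<1$. Then the problem $$u'''(t)=f(t,u(t),u'(t),u''(t)),\ 0<t<1,\qquad B_1[u]=B_2[u]=B_3[u]=0$$ has a unique monotone nonnegative solution $u$ satisfying, for all $0\le t\le1$, $$0\le u(t)\le M_0M,\quad 0\le\sigma(G)\sigma(G_1)u'(t)\le M_1M,\quad |u''(t)|\le M_2M.$$
   Context: The Green function $G(t,s)$ of the linear problem $u'''=\varphi$, $B_1[u]=B_2[u]=B_3[u]=0$ is the function on $[0,1]^2$ such that for every $\varphi\in C[0,1]$ the unique solution is $u(t)=\int_0^1G(t,s)\varphi(s)ds$. For a function $H$ of constant sign on $[0,1]^2$, $\sigma(H)=1$ if $H\ge0$ there and $\sigma(H)=-1$ if $H\le0$ there. *)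

theory Defs
  imports "HOL-Analysis.Analysis"
begin

text \<open>Boundary coefficients are given as functions a b c :: nat => real, indexed by 1, 2, 3.
  The coefficient matrix of the boundary conditions (3 x 6).\<close>
definition bc_matrix :: "(nat \<Rightarrow> real) \<Rightarrow> (nat \<Rightarrow> real) \<Rightarrow> (nat \<Rightarrow> real) \<Rightarrow> real^6^3" where
  "bc_matrix a b c = vector
     [vector [a 1, b 1, c 1, 0, 0, 0],
      vector [a 2, b 2, c 2, 0, 0, 0],
      vector [0, 0, 0, a 3, b 3, c 3]]"

definition derivs2 :: "(real \<Rightarrow> real) \<Rightarrow> (real \<Rightarrow> real) \<Rightarrow> (real \<Rightarrow> real) \<Rightarrow> bool" where
  "derivs2 u u1 u2 \<longleftrightarrow>
     (\<forall>t\<in>{0..1}. (u has_real_derivative u1 t) (at t within {0..1}) \<and>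
                 (u1 has_real_derivative u2 t) (at t within {0..1}))"

definition bvp3_sol ::
  "(nat \<Rightarrow> real) \<Rightarrow> (nat \<Rightarrow> real) \<Rightarrow> (nat \<Rightarrow> real) \<Rightarrow> (real \<Rightarrow> real \<Rightarrow> real \<Rightarrow> real \<Rightarrow> real)
     \<Rightarrow> (real \<Rightarrow> real) \<Rightarrow> (real \<Rightarrow> real) \<Rightarrow> (real \<Rightarrow> real) \<Rightarrow> bool" where
  "bvp3_sol a b c F u u1 u2 \<longleftrightarrow>
     derivs2 u u1 u2 \<and> continuous_on {0..1} u2 \<and>
     (\<forall>t\<in>{0<..<1}. (u2 has_real_derivative F t (u t) (u1 t) (u2 t)) (at t)) \<and>
     a 1 * u 0 + b 1 * u1 0 + c 1 * u2 0 = 0 \<and>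
     a 2 * u 0 + b 2 * u1 0 + c 2 * u2 0 = 0 \<and>
     a 3 * u 1 + b 3 * u1 1 + c 3 * u2 1 = 0"

definition green3 ::
  "(nat \<Rightarrow> real) \<Rightarrow> (nat \<Rightarrow> real) \<Rightarrow> (nat \<Rightarrow> real) \<Rightarrow> (real \<Rightarrow> real \<Rightarrow> real) \<Rightarrow> bool" where
  "green3 a b c G \<longleftrightarrow>
     (\<forall>\<phi>. continuous_on {0..1} \<phi> \<longrightarrow>
        (\<exists>u u1 u2. bvp3_sol a b c (\<lambda>t x y z. \<phi> t) u u1 u2) \<and>
        (\<forall>u u1 u2. bvp3_sol a b c (\<lambda>t x y z. \<phi> t) u u1 u2 \<longrightarrow>
           (\<forall>t\<in>{0..1}. ((\<lambda>s. G t s * \<phi> s) has_integral u t) {0..1})))"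

definition const_sign :: "(real \<Rightarrow> real \<Rightarrow> real) \<Rightarrow> bool" where
  "const_sign H \<longleftrightarrow> (\<forall>t\<in>{0..1}. \<forall>s\<in>{0..1}. H t s \<ge> 0) \<or> (\<forall>t\<in>{0..1}. \<forall>s\<in>{0..1}. H t s \<le> 0)"

definition sigma :: "(real \<Rightarrow> real \<Rightarrow> real) \<Rightarrow> real" where
  "sigma H = (if \<forall>t\<in>{0..1}. \<forall>s\<in>{0..1}. H t s \<ge> 0 then 1 else -1)"

definition Mnorm :: "(real \<Rightarrow> real \<Rightarrow> real) \<Rightarrow> real" where
  "Mnorm H = (SUP t\<in>{0..1}. integral {0..1} (\<lambda>s. \<bar>H t s\<bar>))"

definition DMplus :: "real \<Rightarrow> real \<Rightarrow> real \<Rightarrow> real \<Rightarrow> real \<Rightarrow> real \<Rightarrow> (real \<times> real \<times> real \<times> real) set" where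
  "DMplus M0 M1 M2 sG sG1 M = {(t, x, y, z). 0 \<le> t \<and> t \<le> 1 \<and> 0 \<le> x \<and> x \<le> M0 * M \<and>
      0 \<le> sG * sG1 * y \<and> sG * sG1 * y \<le> M1 * M \<and> \<bar>z\<bar> \<le> M2 * M}"

end

(* Taylor's formula with integral remainder, evaluated at t = 0, 1/2, 1, shows that G(t,.)
   agrees almost everywhere with an explicit kernel: a quadratic polynomial in t plus
   (t - s)_+^2/2.  Differentiating that kernel in t, along sequences so that only countably many
   null sets are discarded, shows that G1(t,.) and G2(t,.) are almost everywhere the kernels
   reproducing u' and u''.  Hence u solves the nonlinear problem iff phi = u''' is a fixed point
   of phi |-> f(t, G phi, G1 phi, G2 phi).  On continuous phi with 0 <= sigma(G) phi <= M this map
   stays in the same class, because G and G1 have constant sign and f is bounded, and it is a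
   contraction with constant q in the sup norm.  Banach's fixed point theorem gives existence and
   uniqueness; the sign of sigma(G) sigma(G1) u' gives monotonicity. *)

theory Submission
  imports Defs
begin

section \<open>Functions orthogonal to all continuous functions\<close>

lemma tendsto_ramp_indicator:
  fixes s x :: real
  shows "(\<lambda>n. max 0 (min 1 (1 - real (Suc n) * (s - x)))) \<longlonglongrightarrow> (if s \<le> x then 1 else 0)"
proof (cases "s \<le> x")
  case True
  then have "max 0 (min 1 (1 - real (Suc n) * (s - x))) = 1" for n
    by (simp add: mult_nonneg_nonpos)
  then show ?thesis using True by simp
next
  case False
  obtain N :: nat where N: "1 / (s - x) < real N"
    using reals_Archimedean2 by blast
  have "max 0 (min 1 (1 - real (Suc n) * (s - x))) = 0" if "n \<ge> N" for n
  proof -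
    have "1 < real N * (s - x)" using N False by (simp add: field_simps)
    also have "\<dots> \<le> real (Suc n) * (s - x)" using that False by (intro mult_right_mono) auto
    finally show ?thesis by simp
  qed
  then have "\<forall>\<^sub>F n in sequentially. max 0 (min 1 (1 - real (Suc n) * (s - x))) = (if s \<le> x then 1 else 0)"
    using False unfolding eventually_sequentially by auto
  then show ?thesis by (rule tendsto_eventually)
qed

lemma integral_Icc_vanishes_if_orthogonal_continuous:
  fixes h :: "real \<Rightarrow> real"
  assumes h: "h absolutely_integrable_on {a..b}"
    and orth: "\<And>\<phi>. continuous_on {a..b} \<phi> \<Longrightarrow> ((\<lambda>s. h s * \<phi> s) has_integral 0) {a..b}"
    and x: "x \<in> {a..b}"
  shows "integral {a..x} h = 0"
proof -
  define \<phi> where "\<phi> n s = max 0 (min 1 (1 - real (Suc n) * (s - x)))" for n s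
  define g where "g s = (if s \<in> {..x} then h s else 0)" for s
  have cont: "continuous_on {a..b} (\<phi> n)" for n
    unfolding \<phi>_def by (intro continuous_intros)
  have "(\<lambda>n. integral {a..b} (\<lambda>s. h s * \<phi> n s)) \<longlonglongrightarrow> integral {a..b} g"
  proof (rule dominated_convergence(2))
    show "(\<lambda>s. h s * \<phi> n s) integrable_on {a..b}" for n
      using orth[OF cont] by blast
    show "(\<lambda>s. norm (h s)) integrable_on {a..b}"
      using h absolutely_integrable_on_def by blast
    show "norm (h s * \<phi> n s) \<le> norm (h s)" for n s
      unfolding \<phi>_def by (auto simp: abs_mult intro!: mult_left_le)
    show "(\<lambda>n. h s * \<phi> n s) \<longlonglongrightarrow> g s" for s
      using tendsto_mult_left[OF tendsto_ramp_indicator[of s x], of "h s"]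
      by (cases "s \<le> x") (simp_all add: \<phi>_def g_def)
  qed
  moreover have "integral {a..b} (\<lambda>s. h s * \<phi> n s) = 0" for n
    using orth[OF cont] by blast
  ultimately have "integral {a..b} g = 0"
    using LIMSEQ_unique[OF tendsto_const] by force
  moreover have "integral {a..b} g = integral {a..x} h"
    unfolding g_def integral_restrict_Int using x by (simp add: Int_commute)
  ultimately show ?thesis by simp
qed

lemma negligible_if_primitives_vanish:
  fixes h :: "real \<Rightarrow> real"
  assumes h: "h integrable_on {a..b}"
    and primitive: "\<And>y. y \<in> {a..b} \<Longrightarrow> integral {a..y} h = 0"
  shows "negligible {s\<in>{a..b}. h s \<noteq> 0}"
proof -
  define hh where "hh s = (if s \<in> {a..b} then h s else 0)" for s
  have hh_integrable: "hh integrable_on cbox c d" for c d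
  proof -
    have "h integrable_on {max a c..min b d}"
      by (rule integrable_on_subinterval[OF h]) auto
    then show ?thesis
      unfolding hh_def by (subst integrable_restrict_Int) (simp add: Int_atLeastAtMost)
  qed
  have hh_primitive: "integral {a..y} hh = 0" if "y \<in> {a..b}" for y
  proof -
    have "integral {a..y} hh = integral {a..y} h"
      by (rule integral_cong) (use that in \<open>auto simp: hh_def\<close>)
    then show ?thesis using primitive[OF that] by simp
  qed
  obtain N where N: "negligible N"
    and Lebesgue_point: "\<And>x e. x \<notin> N \<Longrightarrow> 0 < e \<Longrightarrow>
      \<exists>d>0. \<forall>r. 0 < r \<and> r < d \<longrightarrow>
        norm (integral (cbox x (x + r *\<^sub>R One)) hh /\<^sub>R r ^ DIM(real) - hh x) < e"
    using integrable_ccontinuous_explicit[of hh] hh_integrable by blast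
  \<comment> \<open>At a Lebesgue point x of hh the averages of hh over [x, x + r] tend to hh x, but they vanish.\<close>
  have "{s\<in>{a..b}. h s \<noteq> 0} \<subseteq> N \<union> {b}"
  proof (rule subsetI, rule ccontr)
    fix x assume x: "x \<in> {s\<in>{a..b}. h s \<noteq> 0}" "x \<notin> N \<union> {b}"
    then have xab: "a \<le> x" "x < b" and hx: "hh x \<noteq> 0" by (auto simp: hh_def)
    obtain d where d: "d > 0" and dprop: "\<forall>r. 0 < r \<and> r < d \<longrightarrow>
        norm (integral (cbox x (x + r *\<^sub>R One)) hh /\<^sub>R r ^ DIM(real) - hh x) < \<bar>hh x\<bar>"
      using Lebesgue_point[of x "\<bar>hh x\<bar>"] x hx by auto
    define \<delta> where "\<delta> = min (d/2) ((b - x)/2)"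
    have \<delta>: "0 < \<delta>" "\<delta> < d" "x + \<delta> \<le> b"
      using d xab unfolding \<delta>_def by (auto simp: min_def field_simps)
    have "integral {a..x} hh + integral {x..x+\<delta>} hh = integral {a..x+\<delta>} hh"
      by (rule Henstock_Kurzweil_Integration.integral_combine) (use xab \<delta> hh_integrable in auto)
    then have "integral {x..x+\<delta>} hh = 0"
      using hh_primitive[of x] hh_primitive[of "x+\<delta>"] xab \<delta> by simp
    then show False using dprop \<delta> by auto
  qed
  moreover have "negligible (N \<union> {b})" using N by simp
  ultimately show ?thesis using negligible_subset by blast
qed

lemma negligible_if_orthogonal_continuous:
  fixes h :: "real \<Rightarrow> real"
  assumes h: "h absolutely_integrable_on {a..b}"
    and orth: "\<And>\<phi>. continuous_on {a..b} \<phi> \<Longrightarrow> ((\<lambda>s. h s * \<phi> s) has_integral 0) {a..b}"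
  shows "negligible {s\<in>{a..b}. h s \<noteq> 0}"
  using h integral_Icc_vanishes_if_orthogonal_continuous[OF h orth]
  by (intro negligible_if_primitives_vanish) (auto simp: absolutely_integrable_on_def)

lemma has_real_derivative_unique_along_sequence:
  fixes f g :: "real \<Rightarrow> real"
  assumes f: "(f has_real_derivative f') (at t within S)"
    and g: "(g has_real_derivative g') (at t within S)"
    and x: "\<And>n. x n \<in> S - {t}" "x \<longlonglongrightarrow> t"
    and eq: "\<And>n. f (x n) = g (x n)" "f t = g t"
  shows "f' = g'"
proof -
  have x_at: "filterlim x (at t within S) sequentially"
    using x by (auto simp: filterlim_at)
  have "(\<lambda>n. (f (x n) - f t) / (x n - t)) \<longlonglongrightarrow> f'"
    using filterlim_compose[OF f[unfolded has_field_derivative_iff] x_at] by simp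
  moreover have "(\<lambda>n. (f (x n) - f t) / (x n - t)) \<longlonglongrightarrow> g'"
    using filterlim_compose[OF g[unfolded has_field_derivative_iff] x_at] eq by simp
  ultimately show ?thesis by (rule LIMSEQ_unique)
qed

lemma negligible_partial_derivatives_differ:
  fixes F F' :: "real \<Rightarrow> real \<Rightarrow> real"
  assumes ae: "\<And>\<tau>. \<tau> \<in> S \<Longrightarrow> negligible {s\<in>T. F \<tau> s \<noteq> F' \<tau> s}"
    and t: "t \<in> S" "t islimpt S"
    and F: "\<And>s. s \<in> T \<Longrightarrow> s \<noteq> t \<Longrightarrow> ((\<lambda>\<tau>. F \<tau> s) has_real_derivative DF s) (at t within S)"
    and F': "\<And>s. s \<in> T \<Longrightarrow> s \<noteq> t \<Longrightarrow> ((\<lambda>\<tau>. F' \<tau> s) has_real_derivative DF' s) (at t within S)"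
  shows "negligible {s\<in>T. DF s \<noteq> DF' s}"
proof -
  obtain x where x: "\<And>n. x n \<in> S - {t}" "x \<longlonglongrightarrow> t"
    using t(2) islimpt_sequential by blast
  let ?N = "\<lambda>\<tau>. {s\<in>T. F \<tau> s \<noteq> F' \<tau> s}"
  have "{s\<in>T. DF s \<noteq> DF' s} \<subseteq> ?N t \<union> (\<Union>n. ?N (x n)) \<union> {t}"
  proof (rule subsetI, rule ccontr)
    fix s assume s: "s \<in> {s\<in>T. DF s \<noteq> DF' s}" "s \<notin> ?N t \<union> (\<Union>n. ?N (x n)) \<union> {t}"
    then have "DF s = DF' s"
      by (intro has_real_derivative_unique_along_sequence[OF F F' x]) auto
    with s show False by simp
  qed
  moreover have "negligible (?N t \<union> (\<Union>n. ?N (x n)) \<union> {t})"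
    using ae t x(1) by (intro negligible_Un negligible_Union_nat) auto
  ultimately show ?thesis using negligible_subset by blast
qed

lemma has_real_derivative_Icc_if_interior:
  assumes f: "continuous_on {a..b} f" and f': "continuous_on {a..b} f'"
    and deriv: "\<And>x. x \<in> {a<..<b} \<Longrightarrow> (f has_real_derivative f' x) (at x)"
    and t: "t \<in> {a..b}"
  shows "(f has_real_derivative f' t) (at t within {a..b})"
proof -
  have primitive: "f x = f a + integral {a..x} f'" if x: "x \<in> {a..b}" for x
  proof -
    have "(f' has_integral f x - f a) {a..x}"
    proof (rule fundamental_theorem_of_calculus_interior)
      show "continuous_on {a..x} f"
        by (rule continuous_on_subset[OF f]) (use x in auto)
      show "(f has_vector_derivative f' y) (at y)" if "y \<in> {a<..<x}" for y
        using deriv[of y] that x by (simp add: has_real_derivative_iff_has_vector_derivative)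
    qed (use x in auto)
    then show ?thesis by (simp add: integral_unique)
  qed
  have "((\<lambda>x. f a + integral {a..x} f') has_real_derivative f' t) (at t within {a..b})"
    using integral_has_real_derivative[OF f' t] by (auto intro!: derivative_eq_intros)
  then show ?thesis
    by (rule has_field_derivative_transform_within[where d = 1]) (use t in \<open>auto simp: primitive[symmetric]\<close>)
qed

lemma mono_on_Icc_if_derivative_nonneg:
  fixes u :: "real \<Rightarrow> real"
  assumes u: "\<And>x. x \<in> {a..b} \<Longrightarrow> (u has_real_derivative u' x) (at x within {a..b})"
    and nonneg: "\<And>x. x \<in> {a..b} \<Longrightarrow> 0 \<le> u' x"
  shows "mono_on {a..b} u"
proof (rule mono_onI)
  fix r s assume rs: "r \<in> {a..b}" "s \<in> {a..b}" "r \<le> s"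
  have "continuous_on {a..b} u" by (rule DERIV_continuous_on[OF u])
  then have "continuous_on {r..s} u" by (rule continuous_on_subset) (use rs in auto)
  moreover have "(u has_real_derivative u' x) (at x) \<and> 0 \<le> u' x" if "r < x" "x < s" for x
    using u[of x] nonneg[of x] that rs by (simp add: at_within_Icc_at)
  ultimately show "u r \<le> u s"
    using DERIV_nonneg_imp_increasing_open[of r s u] rs by blast
qed

lemma antimono_on_Icc_if_derivative_nonpos:
  fixes u :: "real \<Rightarrow> real"
  assumes u: "\<And>x. x \<in> {a..b} \<Longrightarrow> (u has_real_derivative u' x) (at x within {a..b})"
    and nonpos: "\<And>x. x \<in> {a..b} \<Longrightarrow> u' x \<le> 0"
  shows "antimono_on {a..b} u"
proof -
  have "mono_on {a..b} (\<lambda>x. - u x)"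
    using u nonpos by (intro mono_on_Icc_if_derivative_nonneg[of _ _ _ "\<lambda>x. - u' x"] DERIV_minus) auto
  then show ?thesis unfolding monotone_on_def by auto
qed

section \<open>Truncated powers and Taylor's formula\<close>

definition trunc_power :: "nat \<Rightarrow> real \<Rightarrow> real \<Rightarrow> real" where
  "trunc_power k t s = (if s \<le> t then (t - s) ^ k / fact k else 0)"

lemma trunc_power_has_derivative:
  assumes "t \<noteq> s"
  shows "((\<lambda>t. trunc_power (Suc k) t s) has_real_derivative trunc_power k t s) (at t)"
proof (cases "s < t")
  case True
  have "((\<lambda>t. (t - s) ^ Suc k / fact (Suc k)) has_real_derivative trunc_power k t s) (at t)"
    using True by (auto intro!: derivative_eq_intros simp: trunc_power_def simp del: power_Suc)
  then show ?thesis
    by (rule has_field_derivative_transform_within_open[of _ _ _ "{s<..}"])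
      (use True in \<open>auto simp: trunc_power_def\<close>)
next
  case False
  with assms have "((\<lambda>t. 0) has_real_derivative trunc_power k t s) (at t)"
    by (simp add: trunc_power_def)
  then show ?thesis
    by (rule has_field_derivative_transform_within_open[of _ _ _ "{..<s}"])
      (use False assms in \<open>auto simp: trunc_power_def\<close>)
qed

lemma abs_trunc_power_le_1:
  assumes "t \<in> {0..1}" "s \<in> {0..1}"
  shows "\<bar>trunc_power k t s\<bar> \<le> 1"
proof -
  have "(t - s) ^ k / fact k \<le> 1" if "s \<le> t"
  proof -
    have "(t - s) ^ k \<le> 1" using assms that by (intro power_le_one) auto
    also have "1 \<le> (fact k :: real)" by (rule fact_ge_1)
    finally show ?thesis by simp
  qed
  then show ?thesis unfolding trunc_power_def by auto
qed

lemma has_integral_trunc_power: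
  assumes "((\<lambda>s. (t - s) ^ k / fact k * \<phi> s) has_integral I) {a..t}" "t \<in> {a..b}"
  shows "((\<lambda>s. trunc_power k t s * \<phi> s) has_integral I) {a..b}"
proof -
  have "{..t} \<inter> {a..b} = {a..t}" using assms(2) by auto
  then have "((\<lambda>s. if s \<in> {..t} then (t - s) ^ k / fact k * \<phi> s else 0) has_integral I) {a..b}"
    using assms(1) by (simp only: has_integral_restrict_Int)
  then show ?thesis
    by (rule has_integral_eq[rotated]) (simp add: trunc_power_def)
qed

lemma trunc_power_absolutely_integrable:
  assumes "t \<in> {a..b}"
  shows "trunc_power k t absolutely_integrable_on {a..b}"
proof (rule nonnegative_absolutely_integrable_1)
  have "((\<lambda>s. (t - s) ^ k / fact k * 1) has_integral
      integral {a..t} (\<lambda>s. (t - s) ^ k / fact k * 1)) {a..t}"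
    by (intro integrable_integral integrable_continuous_interval continuous_intros) auto
  from has_integral_trunc_power[OF this assms] show "trunc_power k t integrable_on {a..b}"
    by auto
qed (auto simp: trunc_power_def)

lemma taylor_trunc_power:
  fixes D :: "nat \<Rightarrow> real \<Rightarrow> real"
  assumes D: "\<And>m x. m < p \<Longrightarrow> x \<in> {a..b} \<Longrightarrow>
      (D m has_real_derivative D (Suc m) x) (at x within {a..b})"
    and p: "0 < p" and t: "t \<in> {a..b}"
  shows "((\<lambda>s. trunc_power (p - 1) t s * D p s) has_integral
      D 0 t - (\<Sum>i<p. (t - a) ^ i / fact i * D i a)) {a..b}"
proof (rule has_integral_trunc_power[OF _ t])
  have "(D m has_vector_derivative D (Suc m) x) (at x within {a..t})"
    if "m < p" "a \<le> x" "x \<le> t" for m x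
    using D[of m x] that t
    by (auto simp: has_real_derivative_iff_has_vector_derivative intro: has_vector_derivative_within_subset)
  from Taylor_has_integral[of p D "D 0", OF p refl this] t
  show "((\<lambda>s. (t - s) ^ (p - 1) / fact (p - 1) * D p s) has_integral
      D 0 t - (\<Sum>i<p. (t - a) ^ i / fact i * D i a)) {a..t}"
    by simp
qed

section \<open>Contractions on spaces of continuous functions\<close>

lemma apply_Bcontfun_ext_cont:
  fixes \<phi> :: "'a::euclidean_space \<Rightarrow> 'b::metric_space"
  assumes "continuous_on (cbox a b) \<phi>"
  shows "apply_bcontfun (Bcontfun (ext_cont \<phi> a b)) = ext_cont \<phi> a b"
  using assms
  by (intro Bcontfun_inverse)
    (auto simp: bcontfun_def ext_cont_def intro!: continuous_on_ext_cont[unfolded ext_cont_def]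
      clamp_bounded compact_imp_bounded[OF compact_continuous_image])

lemma contraction_fixpoint_Icc:
  fixes \<Phi> :: "(real \<Rightarrow> real) \<Rightarrow> real \<Rightarrow> real" and C :: "real set" and a b :: real
  defines "X \<equiv> {\<phi>. continuous_on {a..b} \<phi> \<and> \<phi> ` {a..b} \<subseteq> C}"
  assumes C: "closed C" "bounded C" "C \<noteq> {}" and ab: "a \<le> b"
    and q: "0 \<le> q" "q < 1"
    and maps: "\<And>\<phi>. \<phi> \<in> X \<Longrightarrow> \<Phi> \<phi> \<in> X"
    and contraction: "\<And>\<phi> \<psi> d t. \<phi> \<in> X \<Longrightarrow> \<psi> \<in> X \<Longrightarrow>
      (\<And>s. s \<in> {a..b} \<Longrightarrow> \<bar>\<phi> s - \<psi> s\<bar> \<le> d) \<Longrightarrow> t \<in> {a..b} \<Longrightarrow> \<bar>\<Phi> \<phi> t - \<Phi> \<psi> t\<bar> \<le> q * d"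
  obtains \<phi> where "\<phi> \<in> X" "\<And>t. t \<in> {a..b} \<Longrightarrow> \<Phi> \<phi> t = \<phi> t"
proof -
  define K :: "(real \<Rightarrow>\<^sub>C real) set" where "K = PiC UNIV (\<lambda>_. C)"
  have K_X: "apply_bcontfun g \<in> X" if "g \<in> K" for g
    using that by (auto simp: K_def mem_PiC_iff X_def)
  have clamp: "clamp a b x \<in> {a..b}" for x
    using clamp_in_interval[of a b x] ab by simp
  define T where "T g = Bcontfun (ext_cont (\<Phi> (apply_bcontfun g)) a b)" for g
  have T_apply: "apply_bcontfun (T g) = ext_cont (\<Phi> (apply_bcontfun g)) a b" if "g \<in> K" for g
    unfolding T_def using maps[OF K_X[OF that]] by (intro apply_Bcontfun_ext_cont) (simp add: X_def)
  have "T ` K \<subseteq> K"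
  proof (intro image_subsetI)
    fix g assume g: "g \<in> K"
    have "\<Phi> (apply_bcontfun g) (clamp a b x) \<in> C" for x
      using maps[OF K_X[OF g]] clamp by (auto simp: X_def)
    then show "T g \<in> K"
      by (simp add: T_apply[OF g] K_def mem_PiC_iff ext_cont_def)
  qed
  moreover have "dist (T g) (T h) \<le> q * dist g h" if "g \<in> K" "h \<in> K" for g h
  proof (rule dist_bound)
    fix x
    have "\<bar>apply_bcontfun g s - apply_bcontfun h s\<bar> \<le> dist g h" for s
      using dist_bounded[of g s h] by (simp add: dist_real_def)
    then have "\<bar>\<Phi> (apply_bcontfun g) (clamp a b x) - \<Phi> (apply_bcontfun h) (clamp a b x)\<bar>
        \<le> q * dist g h"
      using contraction[OF K_X K_X] that clamp by blast
    then show "dist (apply_bcontfun (T g) x) (apply_bcontfun (T h) x) \<le> q * dist g h"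
      using that by (simp add: T_apply dist_real_def ext_cont_def)
  qed
  moreover have "complete K"
    unfolding complete_eq_closed K_def using C(1) by (rule closed_PiC)
  moreover obtain y where "y \<in> C" using C(3) by blast
  then have "const_bcontfun y \<in> K" by (simp add: K_def mem_PiC_iff const_bcontfun.rep_eq)
  ultimately obtain g where g: "g \<in> K" "T g = g"
    using Banach_fix[OF _ _ q, of K T] by blast
  have "\<Phi> (apply_bcontfun g) t = apply_bcontfun g t" if "t \<in> {a..b}" for t
  proof -
    have "\<Phi> (apply_bcontfun g) t = apply_bcontfun (T g) t"
      using that by (simp add: T_apply[OF g(1)])
    then show ?thesis by (simp add: g(2))
  qed
  then show ?thesis using that[OF K_X[OF g(1)]] by blast
qed

lemma contraction_fixpoint_unique_Icc:
  fixes \<Phi> :: "(real \<Rightarrow> real) \<Rightarrow> real \<Rightarrow> real" and C :: "real set" and a b :: real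
  defines "X \<equiv> {\<phi>. continuous_on {a..b} \<phi> \<and> \<phi> ` {a..b} \<subseteq> C}"
  assumes C: "bounded C" and q: "0 \<le> q" "q < 1"
    and contraction: "\<And>\<phi> \<psi> d t. \<phi> \<in> X \<Longrightarrow> \<psi> \<in> X \<Longrightarrow>
      (\<And>s. s \<in> {a..b} \<Longrightarrow> \<bar>\<phi> s - \<psi> s\<bar> \<le> d) \<Longrightarrow> t \<in> {a..b} \<Longrightarrow> \<bar>\<Phi> \<phi> t - \<Phi> \<psi> t\<bar> \<le> q * d"
    and \<phi>: "\<phi> \<in> X" "\<And>t. t \<in> {a..b} \<Longrightarrow> \<Phi> \<phi> t = \<phi> t"
    and \<psi>: "\<psi> \<in> X" "\<And>t. t \<in> {a..b} \<Longrightarrow> \<Phi> \<psi> t = \<psi> t"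
    and t: "t \<in> {a..b}"
  shows "\<phi> t = \<psi> t"
proof -
  obtain B where B: "\<And>y. y \<in> C \<Longrightarrow> \<bar>y\<bar> \<le> B"
    using C by (auto simp: bounded_iff)
  have iterate: "\<bar>\<phi> s - \<psi> s\<bar> \<le> q ^ n * (2 * B)" if "s \<in> {a..b}" for n s
    using that
  proof (induction n arbitrary: s)
    case 0
    then have "\<phi> s \<in> C" "\<psi> s \<in> C" using \<phi>(1) \<psi>(1) by (auto simp: X_def)
    then have "\<bar>\<phi> s\<bar> \<le> B" "\<bar>\<psi> s\<bar> \<le> B" using B by auto
    then show ?case by simp
  next
    case (Suc n)
    show ?case
      using contraction[OF \<phi>(1) \<psi>(1) Suc.IH Suc.prems] \<phi>(2) \<psi>(2) Suc.prems by simp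
  qed
  have "(\<lambda>n. q ^ n * (2 * B)) \<longlonglongrightarrow> 0"
    using q by (intro tendsto_mult_left_zero LIMSEQ_power_zero) auto
  then have "\<bar>\<phi> t - \<psi> t\<bar> \<le> 0"
    using iterate[OF t] by (intro LIMSEQ_le_const) auto
  then show ?thesis by simp
qed

lemma sigma_cases: "sigma H = 1 \<or> sigma H = -1"
  unfolding sigma_def by auto

lemma sigma_mult_self [simp]: "sigma H * sigma H = 1"
  using sigma_cases[of H] by auto

lemma sigma_mult_eq_abs:
  assumes "const_sign H" "t \<in> {0..1}" "s \<in> {0..1}"
  shows "sigma H * H t s = \<bar>H t s\<bar>"
proof (cases "\<forall>t\<in>{0..1}. \<forall>s\<in>{0..1}. H t s \<ge> 0")
  case True
  then show ?thesis using assms(2,3) by (simp add: sigma_def)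
next
  case False
  then have "H t s \<le> 0" using assms unfolding const_sign_def by auto
  moreover have "sigma H = -1" unfolding sigma_def by (rule if_not_P[OF False])
  ultimately show ?thesis by simp
qed

lemma integral_abs_le_Mnorm:
  assumes "\<And>\<tau>. \<tau> \<in> {0..1} \<Longrightarrow> integral {0..1} (\<lambda>s. \<bar>H \<tau> s\<bar>) \<le> B" "t \<in> {0..1}"
  shows "integral {0..1} (\<lambda>s. \<bar>H t s\<bar>) \<le> Mnorm H"
  unfolding Mnorm_def using assms by (intro cSUP_upper bdd_aboveI2) auto

lemma Mnorm_nonneg:
  assumes "\<And>\<tau>. \<tau> \<in> {0..1} \<Longrightarrow> integral {0..1} (\<lambda>s. \<bar>H \<tau> s\<bar>) \<le> B"
  shows "0 \<le> Mnorm H"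
proof -
  have "0 \<le> integral {0..1} (\<lambda>s. \<bar>H 0 s\<bar>)"
    by (cases "(\<lambda>s. \<bar>H 0 s\<bar>) integrable_on {0..1}")
      (auto intro: integral_nonneg simp: not_integrable_integral)
  also have "\<dots> \<le> Mnorm H" by (rule integral_abs_le_Mnorm[OF assms]) auto
  finally show ?thesis .
qed

definition kernel_op :: "(real \<Rightarrow> real \<Rightarrow> real) \<Rightarrow> (real \<Rightarrow> real) \<Rightarrow> real \<Rightarrow> real" where
  "kernel_op H \<phi> t = integral {0..1} (\<lambda>s. H t s * \<phi> s)"

lemma abs_kernel_op_le:
  assumes H\<phi>: "(\<lambda>s. H t s * \<phi> s) integrable_on {0..1}"
    and H: "H t absolutely_integrable_on {0..1}"
    and \<phi>: "\<And>s. s \<in> {0..1} \<Longrightarrow> \<bar>\<phi> s\<bar> \<le> m"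
  shows "\<bar>kernel_op H \<phi> t\<bar> \<le> integral {0..1} (\<lambda>s. \<bar>H t s\<bar>) * m"
proof -
  have "(\<lambda>s. \<bar>H t s\<bar>) integrable_on {0..1}"
    using H by (simp add: absolutely_integrable_on_def)
  then have "norm (kernel_op H \<phi> t) \<le> integral {0..1} (\<lambda>s. \<bar>H t s\<bar> * m)"
    unfolding kernel_op_def using H\<phi> \<phi>
    by (intro integral_norm_bound_integral integrable_on_mult_left)
      (auto simp: abs_mult intro: mult_left_mono)
  then show ?thesis by simp
qed

lemma kernel_op_diff:
  assumes "(\<lambda>s. H t s * \<phi> s) integrable_on {0..1}" "(\<lambda>s. H t s * \<psi> s) integrable_on {0..1}"
  shows "kernel_op H \<phi> t - kernel_op H \<psi> t = kernel_op H (\<lambda>s. \<phi> s - \<psi> s) t"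
  unfolding kernel_op_def using integral_diff[OF assms] by (simp add: right_diff_distrib)

lemma kernel_op_sign_bounds:
  assumes H\<phi>: "(\<lambda>s. H t s * \<phi> s) integrable_on {0..1}"
    and H: "H t absolutely_integrable_on {0..1}" "const_sign H" and t: "t \<in> {0..1}"
    and \<phi>: "\<And>s. s \<in> {0..1} \<Longrightarrow> 0 \<le> \<sigma> * \<phi> s \<and> \<sigma> * \<phi> s \<le> m"
  shows "0 \<le> sigma H * \<sigma> * kernel_op H \<phi> t \<and>
    sigma H * \<sigma> * kernel_op H \<phi> t \<le> integral {0..1} (\<lambda>s. \<bar>H t s\<bar>) * m"
proof -
  have eq: "sigma H * \<sigma> * (H t s * \<phi> s) = \<bar>H t s\<bar> * (\<sigma> * \<phi> s)" if "s \<in> {0..1}" for s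
  proof -
    have "sigma H * \<sigma> * (H t s * \<phi> s) = (sigma H * H t s) * (\<sigma> * \<phi> s)"
      by (simp only: ac_simps)
    then show ?thesis using sigma_mult_eq_abs[OF H(2) t that] by simp
  qed
  have int: "(\<lambda>s. \<bar>H t s\<bar> * (\<sigma> * \<phi> s)) integrable_on {0..1}"
    using integrable_on_cmult_left[OF H\<phi>, of "sigma H * \<sigma>"] eq by (auto elim: integrable_eq)
  have "sigma H * \<sigma> * kernel_op H \<phi> t = integral {0..1} (\<lambda>s. \<bar>H t s\<bar> * (\<sigma> * \<phi> s))"
    unfolding kernel_op_def integral_mult_right[symmetric] by (rule integral_cong) (rule eq)
  moreover have "0 \<le> integral {0..1} (\<lambda>s. \<bar>H t s\<bar> * (\<sigma> * \<phi> s))"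
    using int \<phi> by (intro integral_nonneg) auto
  moreover have "integral {0..1} (\<lambda>s. \<bar>H t s\<bar> * (\<sigma> * \<phi> s)) \<le> integral {0..1} (\<lambda>s. \<bar>H t s\<bar> * m)"
    using int H(1) \<phi> by (intro integral_le integrable_on_mult_left mult_left_mono)
      (auto simp: absolutely_integrable_on_def)
  ultimately show ?thesis by simp
qed

section \<open>The Green function and its derivatives\<close>

lemma has_integral_transform:
  "(f has_integral i) S \<Longrightarrow> (\<And>x. x \<in> S \<Longrightarrow> f x = g x) \<Longrightarrow> i = j \<Longrightarrow> (g has_integral j) S"
  using has_integral_eq by blast

lemma linear_solution_taylor:
  assumes \<phi>: "continuous_on {0..1} \<phi>" and sol: "bvp3_sol a b c (\<lambda>t x y z. \<phi> t) u u1 u2"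
    and t: "t \<in> {0..1}"
  shows "((\<lambda>s. trunc_power 2 t s * \<phi> s) has_integral u t - (u 0 + u1 0 * t + u2 0 * t\<^sup>2 / 2)) {0..1}"
    and "((\<lambda>s. trunc_power 1 t s * \<phi> s) has_integral u1 t - (u1 0 + u2 0 * t)) {0..1}"
    and "((\<lambda>s. trunc_power 0 t s * \<phi> s) has_integral u2 t - u2 0) {0..1}"
proof -
  have du: "(u has_real_derivative u1 x) (at x within {0..1})"
    and du1: "(u1 has_real_derivative u2 x) (at x within {0..1})"
    and du2: "(u2 has_real_derivative \<phi> x) (at x within {0..1})" if "x \<in> {0..1}" for x
    using sol \<phi> that by (auto simp: bvp3_sol_def derivs2_def intro: has_real_derivative_Icc_if_interior)
  have "((\<lambda>s. trunc_power (3 - 1) t s * ([u, u1, u2, \<phi>] ! 3) s) has_integral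
      ([u, u1, u2, \<phi>] ! 0) t - (\<Sum>i<3. (t - 0) ^ i / fact i * ([u, u1, u2, \<phi>] ! i) 0)) {0..1}"
    by (rule taylor_trunc_power) (use t in \<open>auto simp: less_Suc_eq numeral_3_eq_3 du du1 du2\<close>)
  then show "((\<lambda>s. trunc_power 2 t s * \<phi> s) has_integral u t - (u 0 + u1 0 * t + u2 0 * t\<^sup>2 / 2)) {0..1}"
    by (simp add: numeral_3_eq_3 numeral_2_eq_2 power2_eq_square algebra_simps)
  have "((\<lambda>s. trunc_power (2 - 1) t s * ([u1, u2, \<phi>] ! 2) s) has_integral
      ([u1, u2, \<phi>] ! 0) t - (\<Sum>i<2. (t - 0) ^ i / fact i * ([u1, u2, \<phi>] ! i) 0)) {0..1}"
    by (rule taylor_trunc_power) (use t in \<open>auto simp: less_Suc_eq numeral_2_eq_2 du1 du2\<close>)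
  then show "((\<lambda>s. trunc_power 1 t s * \<phi> s) has_integral u1 t - (u1 0 + u2 0 * t)) {0..1}"
    by (simp add: numeral_2_eq_2 algebra_simps)
  have "((\<lambda>s. trunc_power (1 - 1) t s * ([u2, \<phi>] ! 1) s) has_integral
      ([u2, \<phi>] ! 0) t - (\<Sum>i<1. (t - 0) ^ i / fact i * ([u2, \<phi>] ! i) 0)) {0..1}"
    by (rule taylor_trunc_power) (use t in \<open>auto simp: du2\<close>)
  then show "((\<lambda>s. trunc_power 0 t s * \<phi> s) has_integral u2 t - u2 0) {0..1}"
    by simp
qed

(* For a solution of u''' = phi, green_increment G tau integrates phi to
   u'(0) tau + u''(0) tau^2/2; the values tau = 1/2 and tau = 1 determine the kernels
   green_coeff1 G and green_coeff2 G of u'(0) and u''(0). *)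
definition green_increment :: "(real \<Rightarrow> real \<Rightarrow> real) \<Rightarrow> real \<Rightarrow> real \<Rightarrow> real" where
  "green_increment G \<tau> s = G \<tau> s - G 0 s - trunc_power 2 \<tau> s"

definition green_coeff1 :: "(real \<Rightarrow> real \<Rightarrow> real) \<Rightarrow> real \<Rightarrow> real" where
  "green_coeff1 G s = 4 * green_increment G (1/2) s - green_increment G 1 s"

definition green_coeff2 :: "(real \<Rightarrow> real \<Rightarrow> real) \<Rightarrow> real \<Rightarrow> real" where
  "green_coeff2 G s = 4 * green_increment G 1 s - 8 * green_increment G (1/2) s"

definition green_repr :: "(real \<Rightarrow> real \<Rightarrow> real) \<Rightarrow> real \<Rightarrow> real \<Rightarrow> real" where
  "green_repr G t s = G 0 s + green_coeff1 G s * t + green_coeff2 G s * t\<^sup>2 / 2 + trunc_power 2 t s"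

definition green_repr_dt :: "(real \<Rightarrow> real \<Rightarrow> real) \<Rightarrow> real \<Rightarrow> real \<Rightarrow> real" where
  "green_repr_dt G t s = green_coeff1 G s + green_coeff2 G s * t + trunc_power 1 t s"

definition green_repr_dtt :: "(real \<Rightarrow> real \<Rightarrow> real) \<Rightarrow> real \<Rightarrow> real \<Rightarrow> real" where
  "green_repr_dtt G t s = green_coeff2 G s + trunc_power 0 t s"

definition green_majorant :: "(real \<Rightarrow> real \<Rightarrow> real) \<Rightarrow> real \<Rightarrow> real" where
  "green_majorant G s = \<bar>G 0 s\<bar> + \<bar>green_coeff1 G s\<bar> + \<bar>green_coeff2 G s\<bar> + 1"

lemma green_repr_has_derivative:
  assumes "t \<noteq> s"
  shows "((\<lambda>t. green_repr G t s) has_real_derivative green_repr_dt G t s) (at t)"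
    and "((\<lambda>t. green_repr_dt G t s) has_real_derivative green_repr_dtt G t s) (at t)"
  unfolding green_repr_def green_repr_dt_def green_repr_dtt_def
  using trunc_power_has_derivative[OF assms, of 1] trunc_power_has_derivative[OF assms, of 0]
  by (auto intro!: derivative_eq_intros simp: numeral_2_eq_2)

lemma abs_green_repr_le_majorant:
  assumes t: "t \<in> {0..1}" and s: "s \<in> {0..1}"
  shows "\<bar>green_repr G t s\<bar> \<le> green_majorant G s"
    and "\<bar>green_repr_dt G t s\<bar> \<le> green_majorant G s"
    and "\<bar>green_repr_dtt G t s\<bar> \<le> green_majorant G s"
proof -
  have "t\<^sup>2 \<le> 2" using t power_le_one[of t 2] by simp
  then have x: "\<bar>x * t\<bar> \<le> \<bar>x\<bar>" "\<bar>x * t\<^sup>2 / 2\<bar> \<le> \<bar>x\<bar>" for x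
    using t by (auto simp: abs_mult intro!: mult_left_le mult_left_mono)
  note tp = abs_trunc_power_le_1[OF t s]
  show "\<bar>green_repr G t s\<bar> \<le> green_majorant G s"
    using x[of "green_coeff1 G s"] x[of "green_coeff2 G s"] tp[of 2]
    unfolding green_repr_def green_majorant_def by linarith
  show "\<bar>green_repr_dt G t s\<bar> \<le> green_majorant G s"
    using x[of "green_coeff2 G s"] tp[of 1]
    unfolding green_repr_dt_def green_majorant_def by linarith
  show "\<bar>green_repr_dtt G t s\<bar> \<le> green_majorant G s"
    using tp[of 0] unfolding green_repr_dtt_def green_majorant_def by linarith
qed

locale green_function =
  fixes a b c :: "nat \<Rightarrow> real" and G :: "real \<Rightarrow> real \<Rightarrow> real"
  assumes green: "green3 a b c G" and sign: "const_sign G"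
begin

lemma linear_solution_exists:
  assumes "continuous_on {0..1} \<phi>"
  obtains u u1 u2 where "bvp3_sol a b c (\<lambda>t x y z. \<phi> t) u u1 u2"
  using green assms unfolding green3_def by blast

lemma green_has_integral:
  assumes "continuous_on {0..1} \<phi>" "bvp3_sol a b c (\<lambda>t x y z. \<phi> t) u u1 u2" "t \<in> {0..1}"
  shows "((\<lambda>s. G t s * \<phi> s) has_integral u t) {0..1}"
  using green assms unfolding green3_def by blast

lemma green_absolutely_integrable:
  assumes t: "t \<in> {0..1}"
  shows "G t absolutely_integrable_on {0..1}"
proof (rule absolutely_integrable_onI)
  \<comment> \<open>green3 only gives integrability of G t against continuous functions;
    the constant sign upgrades it to absolute integrability.\<close>
  have one: "continuous_on {0..1} (\<lambda>_::real. 1::real)" by simp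
  obtain u u1 u2 where "bvp3_sol a b c (\<lambda>t x y z. 1) u u1 u2"
    using linear_solution_exists[OF one] .
  from green_has_integral[OF one this t] show Gt: "G t integrable_on {0..1}" by auto
  show "(\<lambda>s. norm (G t s)) integrable_on {0..1}"
    using integrable_on_cmult_left[OF Gt, of "sigma G"] sigma_mult_eq_abs[OF sign t]
    by (auto elim: integrable_eq)
qed

lemma green_repr_has_integral:
  assumes \<phi>: "continuous_on {0..1} \<phi>" and sol: "bvp3_sol a b c (\<lambda>t x y z. \<phi> t) u u1 u2"
    and t: "t \<in> {0..1}"
  shows "((\<lambda>s. green_repr G t s * \<phi> s) has_integral u t) {0..1}"
    and "((\<lambda>s. green_repr_dt G t s * \<phi> s) has_integral u1 t) {0..1}"
    and "((\<lambda>s. green_repr_dtt G t s * \<phi> s) has_integral u2 t) {0..1}"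
proof -
  have in01: "(0::real) \<in> {0..1}" "(1/2::real) \<in> {0..1}" "(1::real) \<in> {0..1}" by auto
  note taylor = linear_solution_taylor[OF \<phi> sol]
  note G = green_has_integral[OF \<phi> sol]
  have incr: "((\<lambda>s. green_increment G \<tau> s * \<phi> s) has_integral u1 0 * \<tau> + u2 0 * \<tau>\<^sup>2 / 2) {0..1}"
    if "\<tau> \<in> {0..1}" for \<tau>
    using has_integral_diff[OF has_integral_diff[OF G[OF that] G[OF in01(1)]] taylor(1)[OF that]]
    by (rule has_integral_transform) (auto simp: green_increment_def algebra_simps)
  have c1: "((\<lambda>s. green_coeff1 G s * \<phi> s) has_integral u1 0) {0..1}"
    using has_integral_diff[OF has_integral_mult_right[OF incr[OF in01(2)], of 4] incr[OF in01(3)]]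
    by (rule has_integral_transform) (auto simp: green_coeff1_def algebra_simps power2_eq_square)
  have c2: "((\<lambda>s. green_coeff2 G s * \<phi> s) has_integral u2 0) {0..1}"
    using has_integral_diff[OF has_integral_mult_right[OF incr[OF in01(3)], of 4]
        has_integral_mult_right[OF incr[OF in01(2)], of 8]]
    by (rule has_integral_transform) (auto simp: green_coeff2_def algebra_simps power2_eq_square)
  show "((\<lambda>s. green_repr G t s * \<phi> s) has_integral u t) {0..1}"
    using has_integral_add[OF has_integral_add[OF has_integral_add[OF G[OF in01(1)]
        has_integral_mult_left[OF c1, of t]] has_integral_mult_left[OF c2, of "t\<^sup>2 / 2"]] taylor(1)[OF t]]
    by (rule has_integral_transform) (auto simp: green_repr_def algebra_simps)
  show "((\<lambda>s. green_repr_dt G t s * \<phi> s) has_integral u1 t) {0..1}"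
    using has_integral_add[OF has_integral_add[OF c1 has_integral_mult_left[OF c2, of t]] taylor(2)[OF t]]
    by (rule has_integral_transform) (auto simp: green_repr_dt_def algebra_simps)
  show "((\<lambda>s. green_repr_dtt G t s * \<phi> s) has_integral u2 t) {0..1}"
    using has_integral_add[OF c2 taylor(3)[OF t]]
    by (rule has_integral_transform) (auto simp: green_repr_dtt_def algebra_simps)
qed

lemma green_majorant_absolutely_integrable: "green_majorant G absolutely_integrable_on {0..1}"
proof -
  have "green_increment G \<tau> absolutely_integrable_on {0..1}" if "\<tau> \<in> {0..1}" for \<tau>
    unfolding green_increment_def[abs_def]
    using green_absolutely_integrable[OF that] green_absolutely_integrable[of 0]
      trunc_power_absolutely_integrable[OF that]
    by auto
  then have "green_coeff1 G absolutely_integrable_on {0..1}"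
    "green_coeff2 G absolutely_integrable_on {0..1}"
    unfolding green_coeff1_def[abs_def] green_coeff2_def[abs_def] by auto
  moreover have "(\<lambda>_::real. 1::real) absolutely_integrable_on {0..1}"
    by (rule absolutely_integrable_continuous_real) simp
  ultimately show ?thesis
    unfolding green_majorant_def[abs_def] using green_absolutely_integrable[of 0]
    by (intro set_integral_add(1) set_integrable_abs) auto
qed

lemma green_repr_absolutely_integrable:
  assumes t: "t \<in> {0..1}"
  shows "green_repr G t absolutely_integrable_on {0..1}"
    and "green_repr_dt G t absolutely_integrable_on {0..1}"
    and "green_repr_dtt G t absolutely_integrable_on {0..1}"
proof -
  have one: "continuous_on {0..1} (\<lambda>_::real. 1::real)" by simp
  obtain u u1 u2 where sol: "bvp3_sol a b c (\<lambda>t x y z. 1) u u1 u2"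
    using linear_solution_exists[OF one] .
  have majorant: "green_majorant G integrable_on {0..1}"
    using green_majorant_absolutely_integrable by (simp add: absolutely_integrable_on_def)
  note repr = green_repr_has_integral[OF one sol t] and bound = abs_green_repr_le_majorant[OF t]
  show "green_repr G t absolutely_integrable_on {0..1}"
    by (rule absolutely_integrable_integrable_bound[OF _ _ majorant]) (use repr(1) bound(1) in auto)
  show "green_repr_dt G t absolutely_integrable_on {0..1}"
    by (rule absolutely_integrable_integrable_bound[OF _ _ majorant]) (use repr(2) bound(2) in auto)
  show "green_repr_dtt G t absolutely_integrable_on {0..1}"
    by (rule absolutely_integrable_integrable_bound[OF _ _ majorant]) (use repr(3) bound(3) in auto)
qed

lemma green_ae_eq_repr:
  assumes t: "t \<in> {0..1}"
  shows "negligible {s\<in>{0..1}. G t s \<noteq> green_repr G t s}"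
proof -
  have "negligible {s\<in>{0..1}. G t s - green_repr G t s \<noteq> 0}"
  proof (rule negligible_if_orthogonal_continuous)
    show "(\<lambda>s. G t s - green_repr G t s) absolutely_integrable_on {0..1}"
      using green_absolutely_integrable[OF t] green_repr_absolutely_integrable(1)[OF t] by auto
    fix \<phi> :: "real \<Rightarrow> real" assume \<phi>: "continuous_on {0..1} \<phi>"
    then obtain u u1 u2 where sol: "bvp3_sol a b c (\<lambda>t x y z. \<phi> t) u u1 u2"
      by (rule linear_solution_exists)
    show "((\<lambda>s. (G t s - green_repr G t s) * \<phi> s) has_integral 0) {0..1}"
      using has_integral_diff[OF green_has_integral[OF \<phi> sol t] green_repr_has_integral(1)[OF \<phi> sol t]]
      by (rule has_integral_transform) (auto simp: algebra_simps)
  qed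
  then show ?thesis by simp
qed

end

locale green_function_derivs = green_function +
  fixes G1 G2 :: "real \<Rightarrow> real \<Rightarrow> real"
  assumes G1: "\<And>t s. t \<in> {0..1} \<Longrightarrow> s \<in> {0..1} \<Longrightarrow>
      ((\<lambda>t. G t s) has_real_derivative G1 t s) (at t within {0..1})"
    and G2: "\<And>t s. t \<in> {0..1} \<Longrightarrow> s \<in> {0..1} \<Longrightarrow> t \<noteq> s \<Longrightarrow>
      ((\<lambda>t. G1 t s) has_real_derivative G2 t s) (at t within {0..1})"
begin

lemma green_dt_ae_eq_repr:
  assumes t: "t \<in> {0..1}"
  shows "negligible {s\<in>{0..1}. G1 t s \<noteq> green_repr_dt G t s}"
proof (rule negligible_partial_derivatives_differ[where S = "{0..1}"])
  show "negligible {s\<in>{0..1}. G \<tau> s \<noteq> green_repr G \<tau> s}" if "\<tau> \<in> {0..1}" for \<tau>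
    using that by (rule green_ae_eq_repr)
  show "((\<lambda>\<tau>. G \<tau> s) has_real_derivative G1 t s) (at t within {0..1})" if "s \<in> {0..1}" for s
    using t that by (rule G1)
  show "((\<lambda>\<tau>. green_repr G \<tau> s) has_real_derivative green_repr_dt G t s) (at t within {0..1})"
    if "s \<noteq> t" for s
  proof -
    have "t \<noteq> s" using that by simp
    then show ?thesis by (rule has_field_derivative_at_within[OF green_repr_has_derivative(1)])
  qed
qed (use t in auto)

lemma green_dtt_ae_eq_repr:
  assumes t: "t \<in> {0..1}"
  shows "negligible {s\<in>{0..1}. G2 t s \<noteq> green_repr_dtt G t s}"
proof (rule negligible_partial_derivatives_differ[where S = "{0..1}"])
  show "negligible {s\<in>{0..1}. G1 \<tau> s \<noteq> green_repr_dt G \<tau> s}" if "\<tau> \<in> {0..1}" for \<tau>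
    using that by (rule green_dt_ae_eq_repr)
  show "((\<lambda>\<tau>. G1 \<tau> s) has_real_derivative G2 t s) (at t within {0..1})"
    if "s \<in> {0..1}" "s \<noteq> t" for s
    using t that by (intro G2) auto
  show "((\<lambda>\<tau>. green_repr_dt G \<tau> s) has_real_derivative green_repr_dtt G t s) (at t within {0..1})"
    if "s \<noteq> t" for s
  proof -
    have "t \<noteq> s" using that by simp
    then show ?thesis by (rule has_field_derivative_at_within[OF green_repr_has_derivative(2)])
  qed
qed (use t in auto)

lemma green_kernels_has_integral:
  assumes "continuous_on {0..1} \<phi>" "bvp3_sol a b c (\<lambda>t x y z. \<phi> t) u u1 u2" and t: "t \<in> {0..1}"
  shows "((\<lambda>s. G1 t s * \<phi> s) has_integral u1 t) {0..1}"
    and "((\<lambda>s. G2 t s * \<phi> s) has_integral u2 t) {0..1}"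
  by (rule has_integral_spike[OF green_dt_ae_eq_repr[OF t] _ green_repr_has_integral(2)[OF assms]], simp)
    (rule has_integral_spike[OF green_dtt_ae_eq_repr[OF t] _ green_repr_has_integral(3)[OF assms]], simp)

lemma green_kernels_absolutely_integrable:
  assumes t: "t \<in> {0..1}"
  shows "G1 t absolutely_integrable_on {0..1}" and "G2 t absolutely_integrable_on {0..1}"
  by (rule absolutely_integrable_spike[OF green_repr_absolutely_integrable(2)[OF t] green_dt_ae_eq_repr[OF t]], simp)
    (rule absolutely_integrable_spike[OF green_repr_absolutely_integrable(3)[OF t] green_dtt_ae_eq_repr[OF t]], simp)

lemma integral_abs_green_kernels_le_majorant:
  assumes t: "t \<in> {0..1}"
  shows "integral {0..1} (\<lambda>s. \<bar>G t s\<bar>) \<le> integral {0..1} (green_majorant G)"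
    and "integral {0..1} (\<lambda>s. \<bar>G1 t s\<bar>) \<le> integral {0..1} (green_majorant G)"
    and "integral {0..1} (\<lambda>s. \<bar>G2 t s\<bar>) \<le> integral {0..1} (green_majorant G)"
proof -
  have bound: "integral {0..1} (\<lambda>s. \<bar>K s\<bar>) \<le> integral {0..1} (green_majorant G)"
    if ae: "negligible {s\<in>{0..1}. K s \<noteq> R s}" and R: "R absolutely_integrable_on {0..1}"
      and le: "\<And>s. s \<in> {0..1} \<Longrightarrow> \<bar>R s\<bar> \<le> green_majorant G s" for K R
  proof -
    have "integral {0..1} (\<lambda>s. \<bar>K s\<bar>) = integral {0..1} (\<lambda>s. \<bar>R s\<bar>)"
      by (rule integral_spike[OF ae]) auto
    also have "\<dots> \<le> integral {0..1} (green_majorant G)"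
      using R green_majorant_absolutely_integrable le
      by (intro integral_le) (auto simp: absolutely_integrable_on_def)
    finally show ?thesis .
  qed
  show "integral {0..1} (\<lambda>s. \<bar>G t s\<bar>) \<le> integral {0..1} (green_majorant G)"
    using bound[OF green_ae_eq_repr[OF t] green_repr_absolutely_integrable(1)[OF t]]
      abs_green_repr_le_majorant(1)[OF t] by blast
  show "integral {0..1} (\<lambda>s. \<bar>G1 t s\<bar>) \<le> integral {0..1} (green_majorant G)"
    using bound[OF green_dt_ae_eq_repr[OF t] green_repr_absolutely_integrable(2)[OF t]]
      abs_green_repr_le_majorant(2)[OF t] by blast
  show "integral {0..1} (\<lambda>s. \<bar>G2 t s\<bar>) \<le> integral {0..1} (green_majorant G)"
    using bound[OF green_dtt_ae_eq_repr[OF t] green_repr_absolutely_integrable(3)[OF t]]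
      abs_green_repr_le_majorant(3)[OF t] by blast
qed

lemma integral_abs_green_kernels_le_Mnorm:
  assumes "t \<in> {0..1}"
  shows "integral {0..1} (\<lambda>s. \<bar>G t s\<bar>) \<le> Mnorm G"
    and "integral {0..1} (\<lambda>s. \<bar>G1 t s\<bar>) \<le> Mnorm G1"
    and "integral {0..1} (\<lambda>s. \<bar>G2 t s\<bar>) \<le> Mnorm G2"
  using integral_abs_le_Mnorm[OF integral_abs_green_kernels_le_majorant(1) assms]
    integral_abs_le_Mnorm[OF integral_abs_green_kernels_le_majorant(2) assms]
    integral_abs_le_Mnorm[OF integral_abs_green_kernels_le_majorant(3) assms]
  by auto

lemma Mnorm_green_kernels_nonneg: "0 \<le> Mnorm G" "0 \<le> Mnorm G1" "0 \<le> Mnorm G2"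
  using Mnorm_nonneg[OF integral_abs_green_kernels_le_majorant(1)]
    Mnorm_nonneg[OF integral_abs_green_kernels_le_majorant(2)]
    Mnorm_nonneg[OF integral_abs_green_kernels_le_majorant(3)]
  by auto

lemma kernel_op_green_kernels_eq:
  assumes "continuous_on {0..1} \<phi>" "bvp3_sol a b c (\<lambda>t x y z. \<phi> t) u u1 u2" "t \<in> {0..1}"
  shows "kernel_op G \<phi> t = u t" "kernel_op G1 \<phi> t = u1 t" "kernel_op G2 \<phi> t = u2 t"
  using green_has_integral[OF assms] green_kernels_has_integral[OF assms]
  unfolding kernel_op_def by (auto intro: integral_unique)

lemma green_kernels_integrable:
  assumes \<phi>: "continuous_on {0..1} \<phi>" and t: "t \<in> {0..1}"
  shows "(\<lambda>s. G t s * \<phi> s) integrable_on {0..1}"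
    and "(\<lambda>s. G1 t s * \<phi> s) integrable_on {0..1}"
    and "(\<lambda>s. G2 t s * \<phi> s) integrable_on {0..1}"
proof -
  obtain u u1 u2 where sol: "bvp3_sol a b c (\<lambda>t x y z. \<phi> t) u u1 u2"
    using linear_solution_exists[OF \<phi>] .
  show "(\<lambda>s. G t s * \<phi> s) integrable_on {0..1}"
    "(\<lambda>s. G1 t s * \<phi> s) integrable_on {0..1}"
    "(\<lambda>s. G2 t s * \<phi> s) integrable_on {0..1}"
    using green_has_integral[OF \<phi> sol t] green_kernels_has_integral[OF \<phi> sol t] by auto
qed

lemma kernel_op_green_kernels_bounds:
  assumes sign1: "const_sign G1"
    and \<phi>: "continuous_on {0..1} \<phi>" "\<And>s. s \<in> {0..1} \<Longrightarrow> 0 \<le> sigma G * \<phi> s \<and> sigma G * \<phi> s \<le> m"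
    and t: "t \<in> {0..1}"
  shows "0 \<le> kernel_op G \<phi> t \<and> kernel_op G \<phi> t \<le> Mnorm G * m"
    and "0 \<le> sigma G * sigma G1 * kernel_op G1 \<phi> t \<and> sigma G * sigma G1 * kernel_op G1 \<phi> t \<le> Mnorm G1 * m"
    and "\<bar>kernel_op G2 \<phi> t\<bar> \<le> Mnorm G2 * m"
proof -
  have m: "0 \<le> m" using \<phi>(2)[of 0] by auto
  note int = green_kernels_integrable[OF \<phi>(1) t]
  note Mnorm = integral_abs_green_kernels_le_Mnorm[OF t, THEN mult_right_mono, OF m]
  show "0 \<le> kernel_op G \<phi> t \<and> kernel_op G \<phi> t \<le> Mnorm G * m"
    using kernel_op_sign_bounds[where H = G and t = t, OF int(1) green_absolutely_integrable[OF t] sign t \<phi>(2)] Mnorm(1)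
    by (simp add: mult.assoc[symmetric])
  show "0 \<le> sigma G * sigma G1 * kernel_op G1 \<phi> t \<and> sigma G * sigma G1 * kernel_op G1 \<phi> t \<le> Mnorm G1 * m"
    using kernel_op_sign_bounds[where H = G1 and t = t, OF int(2) green_kernels_absolutely_integrable(1)[OF t] sign1 t \<phi>(2)] Mnorm(2)
    by (simp add: ac_simps)
  have "\<bar>\<phi> s\<bar> \<le> m" if "s \<in> {0..1}" for s
    using \<phi>(2)[OF that] sigma_cases[of G] by auto
  then show "\<bar>kernel_op G2 \<phi> t\<bar> \<le> Mnorm G2 * m"
    using abs_kernel_op_le[where H = G2 and t = t, OF int(3) green_kernels_absolutely_integrable(2)[OF t]] Mnorm(3)
    by (meson order_trans)
qed

lemma kernel_op_green_kernels_lipschitz: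
  assumes \<phi>: "continuous_on {0..1} \<phi>" and \<psi>: "continuous_on {0..1} \<psi>"
    and d: "\<And>s. s \<in> {0..1} \<Longrightarrow> \<bar>\<phi> s - \<psi> s\<bar> \<le> d" and t: "t \<in> {0..1}"
  shows "\<bar>kernel_op G \<phi> t - kernel_op G \<psi> t\<bar> \<le> Mnorm G * d"
    and "\<bar>kernel_op G1 \<phi> t - kernel_op G1 \<psi> t\<bar> \<le> Mnorm G1 * d"
    and "\<bar>kernel_op G2 \<phi> t - kernel_op G2 \<psi> t\<bar> \<le> Mnorm G2 * d"
proof -
  have d0: "0 \<le> d" using d[of 0] by auto
  note int\<phi> = green_kernels_integrable[OF \<phi> t] and int\<psi> = green_kernels_integrable[OF \<psi> t]
  note int = green_kernels_integrable[OF continuous_on_diff[OF \<phi> \<psi>] t]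
  note Mnorm = integral_abs_green_kernels_le_Mnorm[OF t, THEN mult_right_mono, OF d0]
  show "\<bar>kernel_op G \<phi> t - kernel_op G \<psi> t\<bar> \<le> Mnorm G * d"
    unfolding kernel_op_diff[where H = G and t = t, OF int\<phi>(1) int\<psi>(1)]
    using abs_kernel_op_le[where H = G and t = t, OF int(1) green_absolutely_integrable[OF t] d] Mnorm(1) by linarith
  show "\<bar>kernel_op G1 \<phi> t - kernel_op G1 \<psi> t\<bar> \<le> Mnorm G1 * d"
    unfolding kernel_op_diff[where H = G1 and t = t, OF int\<phi>(2) int\<psi>(2)]
    using abs_kernel_op_le[where H = G1 and t = t, OF int(2) green_kernels_absolutely_integrable(1)[OF t] d] Mnorm(2) by linarith
  show "\<bar>kernel_op G2 \<phi> t - kernel_op G2 \<psi> t\<bar> \<le> Mnorm G2 * d"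
    unfolding kernel_op_diff[where H = G2 and t = t, OF int\<phi>(3) int\<psi>(3)]
    using abs_kernel_op_le[where H = G2 and t = t, OF int(3) green_kernels_absolutely_integrable(2)[OF t] d] Mnorm(3) by linarith
qed

lemma continuous_on_kernel_op_green_kernels_eq:
  assumes \<phi>: "continuous_on {0..1} \<phi>"
  shows "continuous_on {0..1} (kernel_op G \<phi>)"
    and "continuous_on {0..1} (kernel_op G1 \<phi>)"
    and "continuous_on {0..1} (kernel_op G2 \<phi>)"
proof -
  obtain u u1 u2 where sol: "bvp3_sol a b c (\<lambda>t x y z. \<phi> t) u u1 u2"
    using linear_solution_exists[OF \<phi>] .
  then have "continuous_on {0..1} u" "continuous_on {0..1} u1" "continuous_on {0..1} u2"
    unfolding bvp3_sol_def derivs2_def by (auto intro: DERIV_continuous_on)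
  with kernel_op_green_kernels_eq[OF \<phi> sol]
  show "continuous_on {0..1} (kernel_op G \<phi>)"
    "continuous_on {0..1} (kernel_op G1 \<phi>)"
    "continuous_on {0..1} (kernel_op G2 \<phi>)"
    by (metis continuous_on_eq)+
qed

end

section \<open>The nonlinear boundary value problem\<close>

lemma graph_in_DMplus_iff:
  "(\<forall>t\<in>{0..1}. (t, u t, u1 t, u2 t) \<in> DMplus M0 M1 M2 sG sG1 M) \<longleftrightarrow>
    (\<forall>t\<in>{0..1}. 0 \<le> u t \<and> u t \<le> M0 * M \<and>
      0 \<le> sG * sG1 * u1 t \<and> sG * sG1 * u1 t \<le> M1 * M \<and> \<bar>u2 t\<bar> \<le> M2 * M)"
  by (auto simp: DMplus_def)

locale nonlinear_green_bvp = green_function_derivs +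
  fixes f :: "real \<Rightarrow> real \<Rightarrow> real \<Rightarrow> real \<Rightarrow> real" and M L0 L1 L2 :: real
  assumes sign1: "const_sign G1"
    and M: "0 \<le> M" and L: "0 \<le> L0" "0 \<le> L1" "0 \<le> L2"
    and f_cont: "continuous_on (DMplus (Mnorm G) (Mnorm G1) (Mnorm G2) (sigma G) (sigma G1) M)
      (\<lambda>(t, x, y, z). f t x y z)"
    and f_bound: "\<And>t x y z. (t, x, y, z) \<in> DMplus (Mnorm G) (Mnorm G1) (Mnorm G2) (sigma G) (sigma G1) M
      \<Longrightarrow> 0 \<le> sigma G * f t x y z \<and> sigma G * f t x y z \<le> M"
    and f_lipschitz: "\<And>t x1 y1 z1 x2 y2 z2.
      (t, x1, y1, z1) \<in> DMplus (Mnorm G) (Mnorm G1) (Mnorm G2) (sigma G) (sigma G1) M \<Longrightarrow>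
      (t, x2, y2, z2) \<in> DMplus (Mnorm G) (Mnorm G1) (Mnorm G2) (sigma G) (sigma G1) M \<Longrightarrow>
      \<bar>f t x2 y2 z2 - f t x1 y1 z1\<bar> \<le> L0 * \<bar>x2 - x1\<bar> + L1 * \<bar>y2 - y1\<bar> + L2 * \<bar>z2 - z1\<bar>"
    and contraction: "L0 * Mnorm G + L1 * Mnorm G1 + L2 * Mnorm G2 < 1"
begin

abbreviation DM :: "(real \<times> real \<times> real \<times> real) set" where
  "DM \<equiv> DMplus (Mnorm G) (Mnorm G1) (Mnorm G2) (sigma G) (sigma G1) M"

abbreviation rhs_range :: "real set" where
  "rhs_range \<equiv> {y. 0 \<le> sigma G * y \<and> sigma G * y \<le> M}"

abbreviation admissible :: "(real \<Rightarrow> real) set" where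
  "admissible \<equiv> {\<phi>. continuous_on {0..1} \<phi> \<and> \<phi> ` {0..1} \<subseteq> rhs_range}"

definition rhs_op :: "(real \<Rightarrow> real) \<Rightarrow> real \<Rightarrow> real" where
  "rhs_op \<phi> t = f t (kernel_op G \<phi> t) (kernel_op G1 \<phi> t) (kernel_op G2 \<phi> t)"

lemma rhs_range_closed_bounded: "closed rhs_range" "bounded rhs_range" "rhs_range \<noteq> {}"
proof -
  have "rhs_range = closed_segment 0 (sigma G * M)"
    using sigma_cases[of G] M by (auto simp: closed_segment_eq_real_ivl)
  then show "closed rhs_range" "bounded rhs_range" "rhs_range \<noteq> {}"
    by (auto simp: bounded_closed_segment)
qed

lemma contraction_constant_nonneg: "0 \<le> L0 * Mnorm G + L1 * Mnorm G1 + L2 * Mnorm G2"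
  using L Mnorm_green_kernels_nonneg by simp

lemma kernel_ops_in_DM:
  assumes "\<phi> \<in> admissible" "t \<in> {0..1}"
  shows "(t, kernel_op G \<phi> t, kernel_op G1 \<phi> t, kernel_op G2 \<phi> t) \<in> DM"
proof -
  have "0 \<le> sigma G * \<phi> s \<and> sigma G * \<phi> s \<le> M" if "s \<in> {0..1}" for s
    using assms(1) that by (auto simp: image_subset_iff)
  from kernel_op_green_kernels_bounds[OF sign1 _ this assms(2)] assms show ?thesis
    by (auto simp: DMplus_def)
qed

lemma f_along_graph_admissible:
  assumes "continuous_on {0..1} x" "continuous_on {0..1} y" "continuous_on {0..1} z"
    and graph: "\<And>t. t \<in> {0..1} \<Longrightarrow> (t, x t, y t, z t) \<in> DM"
  shows "(\<lambda>t. f t (x t) (y t) (z t)) \<in> admissible"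
proof -
  have "continuous_on {0..1} (\<lambda>t. (t, x t, y t, z t))"
    using assms by (intro continuous_intros)
  then have "continuous_on {0..1} ((\<lambda>(t, x, y, z). f t x y z) \<circ> (\<lambda>t. (t, x t, y t, z t)))"
    by (rule continuous_on_compose[OF _ continuous_on_subset[OF f_cont]]) (use graph in auto)
  then show ?thesis
    using f_bound[OF graph] by (auto simp: comp_def)
qed

lemma rhs_op_admissible:
  assumes "\<phi> \<in> admissible"
  shows "rhs_op \<phi> \<in> admissible"
  unfolding rhs_op_def[abs_def]
  by (rule f_along_graph_admissible)
    (use assms in \<open>auto intro: kernel_ops_in_DM continuous_on_kernel_op_green_kernels_eq\<close>)

lemma rhs_op_contraction:
  assumes \<phi>: "\<phi> \<in> admissible" and \<psi>: "\<psi> \<in> admissible"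
    and d: "\<And>s. s \<in> {0..1} \<Longrightarrow> \<bar>\<phi> s - \<psi> s\<bar> \<le> d" and t: "t \<in> {0..1}"
  shows "\<bar>rhs_op \<phi> t - rhs_op \<psi> t\<bar> \<le> (L0 * Mnorm G + L1 * Mnorm G1 + L2 * Mnorm G2) * d"
proof -
  note lip = kernel_op_green_kernels_lipschitz[of \<phi> \<psi> d t]
  have "\<bar>rhs_op \<phi> t - rhs_op \<psi> t\<bar> \<le> L0 * \<bar>kernel_op G \<phi> t - kernel_op G \<psi> t\<bar> +
      L1 * \<bar>kernel_op G1 \<phi> t - kernel_op G1 \<psi> t\<bar> + L2 * \<bar>kernel_op G2 \<phi> t - kernel_op G2 \<psi> t\<bar>"
    unfolding rhs_op_def using f_lipschitz[OF kernel_ops_in_DM[OF \<psi> t] kernel_ops_in_DM[OF \<phi> t]]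
    by (simp add: abs_minus_commute)
  also have "\<dots> \<le> L0 * (Mnorm G * d) + L1 * (Mnorm G1 * d) + L2 * (Mnorm G2 * d)"
    using lip \<phi> \<psi> d t L by (intro add_mono mult_left_mono) auto
  finally show ?thesis by (simp add: algebra_simps)
qed

lemma rhs_op_fixpoint_exists:
  obtains \<phi> where "\<phi> \<in> admissible" "\<And>t. t \<in> {0..1} \<Longrightarrow> rhs_op \<phi> t = \<phi> t"
proof (rule contraction_fixpoint_Icc[OF rhs_range_closed_bounded _ contraction_constant_nonneg contraction])
  show "(0::real) \<le> 1" by simp
  show "rhs_op \<phi> \<in> admissible" if "\<phi> \<in> admissible" for \<phi>
    using that by (rule rhs_op_admissible)
  show "\<bar>rhs_op \<phi> t - rhs_op \<psi> t\<bar> \<le> (L0 * Mnorm G + L1 * Mnorm G1 + L2 * Mnorm G2) * d"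
    if "\<phi> \<in> admissible" "\<psi> \<in> admissible" "\<And>s. s \<in> {0..1} \<Longrightarrow> \<bar>\<phi> s - \<psi> s\<bar> \<le> d"
      "t \<in> {0..1}" for \<phi> \<psi> d t
    using that by (rule rhs_op_contraction)
qed (rule that)

lemma solution_of_fixpoint:
  assumes \<phi>: "\<phi> \<in> admissible" "\<And>t. t \<in> {0..1} \<Longrightarrow> rhs_op \<phi> t = \<phi> t"
    and sol: "bvp3_sol a b c (\<lambda>t x y z. \<phi> t) u u1 u2"
  shows "bvp3_sol a b c f u u1 u2" and "\<forall>t\<in>{0..1}. (t, u t, u1 t, u2 t) \<in> DM"
proof -
  note u = kernel_op_green_kernels_eq[OF _ sol]
  show "\<forall>t\<in>{0..1}. (t, u t, u1 t, u2 t) \<in> DM"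
    using kernel_ops_in_DM[OF \<phi>(1)] u \<phi>(1) by auto
  have "\<phi> t = f t (u t) (u1 t) (u2 t)" if "t \<in> {0..1}" for t
  proof -
    have "\<phi> t = rhs_op \<phi> t" using \<phi>(2) that by simp
    also have "\<dots> = f t (u t) (u1 t) (u2 t)" using u[OF _ that] \<phi>(1) by (simp add: rhs_op_def)
    finally show ?thesis .
  qed
  then show "bvp3_sol a b c f u u1 u2"
    using sol unfolding bvp3_sol_def by auto
qed

lemma fixpoint_of_solution:
  assumes sol: "bvp3_sol a b c f v v1 v2" and graph: "\<forall>t\<in>{0..1}. (t, v t, v1 t, v2 t) \<in> DM"
  defines "\<psi> \<equiv> \<lambda>t. f t (v t) (v1 t) (v2 t)"
  shows "\<psi> \<in> admissible" and "bvp3_sol a b c (\<lambda>t x y z. \<psi> t) v v1 v2"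
    and "\<And>t. t \<in> {0..1} \<Longrightarrow> rhs_op \<psi> t = \<psi> t"
proof -
  show lin: "bvp3_sol a b c (\<lambda>t x y z. \<psi> t) v v1 v2"
    using sol unfolding bvp3_sol_def \<psi>_def by auto
  have "continuous_on {0..1} v" "continuous_on {0..1} v1" "continuous_on {0..1} v2"
    using sol unfolding bvp3_sol_def derivs2_def by (auto intro: DERIV_continuous_on)
  then show \<psi>: "\<psi> \<in> admissible"
    unfolding \<psi>_def using graph by (intro f_along_graph_admissible) auto
  show "rhs_op \<psi> t = \<psi> t" if "t \<in> {0..1}" for t
    using kernel_op_green_kernels_eq[OF _ lin that] \<psi> unfolding rhs_op_def \<psi>_def by auto
qed

lemma bounded_solutions_coincide:
  assumes u: "bvp3_sol a b c f u u1 u2" "\<forall>t\<in>{0..1}. (t, u t, u1 t, u2 t) \<in> DM"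
    and v: "bvp3_sol a b c f v v1 v2" "\<forall>t\<in>{0..1}. (t, v t, v1 t, v2 t) \<in> DM"
    and t: "t \<in> {0..1}"
  shows "v t = u t"
proof -
  note \<phi> = fixpoint_of_solution[OF u] and \<psi> = fixpoint_of_solution[OF v]
  have "f s (v s) (v1 s) (v2 s) = f s (u s) (u1 s) (u2 s)" if "s \<in> {0..1}" for s
    using contraction_fixpoint_unique_Icc[OF rhs_range_closed_bounded(2) contraction_constant_nonneg
        contraction rhs_op_contraction \<psi>(1,3) \<phi>(1,3) that] .
  then have "kernel_op G (\<lambda>s. f s (v s) (v1 s) (v2 s)) t = kernel_op G (\<lambda>s. f s (u s) (u1 s) (u2 s)) t"
    unfolding kernel_op_def by (intro integral_cong) auto
  then show ?thesis
    using kernel_op_green_kernels_eq(1)[OF _ \<psi>(2) t] kernel_op_green_kernels_eq(1)[OF _ \<phi>(2) t] \<psi>(1) \<phi>(1)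
    by simp
qed

lemma monotone_if_graph_in_DM:
  assumes "derivs2 u u1 u2" and graph: "\<forall>t\<in>{0..1}. (t, u t, u1 t, u2 t) \<in> DM"
  shows "mono_on {0..1} u \<or> antimono_on {0..1} u"
proof -
  have u: "\<And>x. x \<in> {0..1} \<Longrightarrow> (u has_real_derivative u1 x) (at x within {0..1})"
    using assms(1) unfolding derivs2_def by auto
  consider "sigma G * sigma G1 = 1" | "sigma G * sigma G1 = -1"
    using sigma_cases[of G] sigma_cases[of G1] by fastforce
  then show ?thesis
  proof cases
    case 1
    then have "0 \<le> u1 x" if "x \<in> {0..1}" for x using graph that by (auto simp: DMplus_def)
    then show ?thesis using mono_on_Icc_if_derivative_nonneg[OF u] by blast
  next
    case 2
    then have "u1 x \<le> 0" if "x \<in> {0..1}" for x using graph that by (auto simp: DMplus_def)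
    then show ?thesis using antimono_on_Icc_if_derivative_nonpos[OF u] by blast
  qed
qed

lemma bounded_solution_exists_unique:
  "\<exists>u u1 u2. bvp3_sol a b c f u u1 u2 \<and> (\<forall>t\<in>{0..1}. (t, u t, u1 t, u2 t) \<in> DM) \<and>
    (mono_on {0..1} u \<or> antimono_on {0..1} u) \<and>
    (\<forall>v v1 v2. bvp3_sol a b c f v v1 v2 \<and> (\<forall>t\<in>{0..1}. (t, v t, v1 t, v2 t) \<in> DM)
      \<longrightarrow> (\<forall>t\<in>{0..1}. v t = u t))"
proof -
  obtain \<phi> where \<phi>: "\<phi> \<in> admissible" "\<And>t. t \<in> {0..1} \<Longrightarrow> rhs_op \<phi> t = \<phi> t"
    using rhs_op_fixpoint_exists by blast
  then obtain u u1 u2 where "bvp3_sol a b c (\<lambda>t x y z. \<phi> t) u u1 u2"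
    using linear_solution_exists by blast
  note u = solution_of_fixpoint[OF \<phi> this]
  show ?thesis
  proof (intro exI conjI allI impI)
    show "bvp3_sol a b c f u u1 u2" by (rule u(1))
    show "\<forall>t\<in>{0..1}. (t, u t, u1 t, u2 t) \<in> DM" by (rule u(2))
    show "mono_on {0..1} u \<or> antimono_on {0..1} u"
      using u by (intro monotone_if_graph_in_DM) (auto simp: bvp3_sol_def)
    fix v v1 v2
    assume "bvp3_sol a b c f v v1 v2 \<and> (\<forall>t\<in>{0..1}. (t, v t, v1 t, v2 t) \<in> DM)"
    then show "\<forall>t\<in>{0..1}. v t = u t" using bounded_solutions_coincide[OF u] by blast
  qed
qed

end

theorem theorem4:
  fixes a b c :: "nat \<Rightarrow> real"
    and G G1 G2 :: "real \<Rightarrow> real \<Rightarrow> real"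
    and f :: "real \<Rightarrow> real \<Rightarrow> real \<Rightarrow> real \<Rightarrow> real"
    and M L0 L1 L2 :: real
  assumes rank3: "rank (bc_matrix a b c) = 3"
    and green: "green3 a b c G"
    and G1: "\<And>t s. t \<in> {0..1} \<Longrightarrow> s \<in> {0..1} \<Longrightarrow>
               ((\<lambda>t. G t s) has_real_derivative G1 t s) (at t within {0..1})"
    and G2: "\<And>t s. t \<in> {0..1} \<Longrightarrow> s \<in> {0..1} \<Longrightarrow> t \<noteq> s \<Longrightarrow>
               ((\<lambda>t. G1 t s) has_real_derivative G2 t s) (at t within {0..1})"
    and signG: "const_sign G" and signG1: "const_sign G1"
    and Mpos: "M > 0" and L: "L0 \<ge> 0" "L1 \<ge> 0" "L2 \<ge> 0"
    and fcont: "continuous_on (DMplus (Mnorm G) (Mnorm G1) (Mnorm G2) (sigma G) (sigma G1) M)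
                  (\<lambda>(t, x, y, z). f t x y z)"
    and fbound: "\<And>t x y z. (t, x, y, z) \<in> DMplus (Mnorm G) (Mnorm G1) (Mnorm G2) (sigma G) (sigma G1) M
                  \<Longrightarrow> 0 \<le> sigma G * f t x y z \<and> sigma G * f t x y z \<le> M"
    and flip: "\<And>t x1 y1 z1 x2 y2 z2.
                  (t, x1, y1, z1) \<in> DMplus (Mnorm G) (Mnorm G1) (Mnorm G2) (sigma G) (sigma G1) M \<Longrightarrow>
                  (t, x2, y2, z2) \<in> DMplus (Mnorm G) (Mnorm G1) (Mnorm G2) (sigma G) (sigma G1) M \<Longrightarrow>
                  \<bar>f t x2 y2 z2 - f t x1 y1 z1\<bar> \<le> L0 * \<bar>x2 - x1\<bar> + L1 * \<bar>y2 - y1\<bar> + L2 * \<bar>z2 - z1\<bar>"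
    and q: "L0 * Mnorm G + L1 * Mnorm G1 + L2 * Mnorm G2 < 1"
  shows "\<exists>u u1 u2.
           bvp3_sol a b c f u u1 u2 \<and>
           (\<forall>t\<in>{0..1}. 0 \<le> u t \<and> u t \<le> Mnorm G * M \<and>
               0 \<le> sigma G * sigma G1 * u1 t \<and> sigma G * sigma G1 * u1 t \<le> Mnorm G1 * M \<and>
               \<bar>u2 t\<bar> \<le> Mnorm G2 * M) \<and>
           (mono_on {0..1} u \<or> antimono_on {0..1} u) \<and>
           (\<forall>v v1 v2. bvp3_sol a b c f v v1 v2 \<and>
               (\<forall>t\<in>{0..1}. 0 \<le> v t \<and> v t \<le> Mnorm G * M \<and>
                  0 \<le> sigma G * sigma G1 * v1 t \<and> sigma G * sigma G1 * v1 t \<le> Mnorm G1 * M \<and>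
                  \<bar>v2 t\<bar> \<le> Mnorm G2 * M)
             \<longrightarrow> (\<forall>t\<in>{0..1}. v t = u t))"
proof -
  have "nonlinear_green_bvp a b c G G1 G2 f M L0 L1 L2"
    using green signG G1 G2 signG1 Mpos L fcont fbound flip q by unfold_locales auto
  from nonlinear_green_bvp.bounded_solution_exists_unique[OF this] show ?thesis
    by (simp only: graph_in_DMplus_iff)
qed

end
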